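(* Let $\varepsilon\in(0,1/256]$, $\tau\in\Gamma$, $\mathcal S=\mathcal S(\tau)$ and $\rho\in\{1,\dots,\lceil1/\varepsilon\rceil\}^{|\tau|}$. Every extreme point $x^*$ of $P(\mathcal S,\rho)$ can be rounded to an integral vector $\bar x\in P(\mathcal S,\rho)\cap\{0,1\}^n$ with $c^T\bar x\le(1+2\varepsilon)\,c^Tx^*$.
   Context: Minimum Knapsack data: $n$ items with costs $c\in\mathbb{R}^n_{\ge0}$, weights $w\in\mathbb{R}^n_{\ge0}$, target $b$; items are indexed so that $1=c_1\ge c_2\ge\dots\ge c_n$. $C_\varepsilon=\lceil\log_{1+\varepsilon}(1/\varepsilon)\rceil$. $\Gamma$ is the set of integer vectors $\tau=(\tau_1,\dots,\tau_K)\in\mathbb{Z}_{\ge0}^K$ with $0\le K=|\tau|\le\lceil2\sqrt{C_\varepsilon}\rceil$, $\tau_k+k\le\tau_{k+1}$ for $k\in[K-1]$, and $\tau_K\le C_\varepsilon-1$. For $\tau\in\Gamma$, $\mathcal S(\tau)=\{S_1,\dots,S_K,S_\infty\}$ where $S_k=\{i\in\{2,\dots,n\}:(1+\varepsilon)^{-\tau_k}\ge c_i>(1+\varepsilon)^{-\min\{\tau_k+k,C_\varepsilon\}}\}$ for $k\in[K]$, and $S_\infty=\{i\in\{2,\dots,n\}: c_i\le(1+\varepsilon)^{-C_\varepsilon}\text{ and } c_i<\min_{l\in S_K}c_l\}$ (the second condition omitted if $K=0$). For $\rho\in\{1,\dots,\lceil1/\varepsilon\rceil\}^K$, $P(\mathcal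 S,\rho)$ is the set of $x\in\mathbb{R}^n$ with: $x_1=1$; $w^Tx\ge b$; $\sum_{i\in S_k}x_i=\rho_k$ for $k\in[K]$ with $\rho_k<\lceil1/\varepsilon\rceil$; $\sum_{i\in S_k}x_i\ge\rho_k$ for $k\in[K]$ with $\rho_k=\lceil1/\varepsilon\rceil$; $x_i=0$ for $i\in\{2,\dots,n\}\setminus\bigcup_{k\in[K]\cup\{\infty\}}S_k$; $0\le x_i\le1$ for $i\in\bigcup_{k\in[K]\cup\{\infty\}}S_k$. *)

theory Defs
  imports Complex_Main
begin

(* Vectors in R^n are modelled as functions nat => real whose support lies in {1..n}
   (coordinates outside {1..n} are 0). Index k in [K] of the paper corresponds to
   list position k-1. *)

definition C_eps :: "real \<Rightarrow> nat" where
  "C_eps \<epsilon> = nat \<lceil>log (1 + \<epsilon>) (1 / \<epsilon>)\<rceil>"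

definition Gamma :: "real \<Rightarrow> nat list set" where
  "Gamma \<epsilon> = {\<tau>. length \<tau> \<le> nat \<lceil>2 * sqrt (real (C_eps \<epsilon>))\<rceil>
      \<and> (\<forall>k\<in>{1..<length \<tau>}. \<tau> ! (k - 1) + k \<le> \<tau> ! k)
      \<and> (\<tau> \<noteq> [] \<longrightarrow> int (last \<tau>) \<le> int (C_eps \<epsilon>) - 1)}"

definition S_k :: "real \<Rightarrow> nat \<Rightarrow> (nat \<Rightarrow> real) \<Rightarrow> nat list \<Rightarrow> nat \<Rightarrow> nat set" where
  "S_k \<epsilon> n c \<tau> k = {i \<in> {2..n}. inverse ((1 + \<epsilon>) ^ (\<tau> ! (k - 1))) \<ge> c i
      \<and> c i > inverse ((1 + \<epsilon>) ^ (min (\<tau> ! (k - 1) + k) (C_eps \<epsilon>)))}"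

(* S_infinity; "c_i < min_{l in S_K} c_l" is read as "c_i < c_l for all l in S_K"
   (vacuous if S_K is empty), and omitted if K = 0 *)
definition S_inf :: "real \<Rightarrow> nat \<Rightarrow> (nat \<Rightarrow> real) \<Rightarrow> nat list \<Rightarrow> nat set" where
  "S_inf \<epsilon> n c \<tau> = {i \<in> {2..n}. c i \<le> inverse ((1 + \<epsilon>) ^ (C_eps \<epsilon>))
      \<and> (\<tau> \<noteq> [] \<longrightarrow> (\<forall>l\<in>S_k \<epsilon> n c \<tau> (length \<tau>). c i < c l))}"

definition S_all :: "real \<Rightarrow> nat \<Rightarrow> (nat \<Rightarrow> real) \<Rightarrow> nat list \<Rightarrow> nat set" where
  "S_all \<epsilon> n c \<tau> = (\<Union>k\<in>{1..length \<tau>}. S_k \<epsilon> n c \<tau> k) \<union> S_inf \<epsilon> n c \<tau>"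

definition P_poly :: "real \<Rightarrow> nat \<Rightarrow> (nat \<Rightarrow> real) \<Rightarrow> (nat \<Rightarrow> real) \<Rightarrow> real
      \<Rightarrow> nat list \<Rightarrow> nat list \<Rightarrow> (nat \<Rightarrow> real) set" where
  "P_poly \<epsilon> n c w b \<tau> \<rho> = {x.
      (\<forall>i. i \<notin> {1..n} \<longrightarrow> x i = 0)
    \<and> x 1 = 1
    \<and> (\<Sum>i=1..n. w i * x i) \<ge> b
    \<and> (\<forall>k\<in>{1..length \<tau>}. \<rho> ! (k - 1) < nat \<lceil>1 / \<epsilon>\<rceil> \<longrightarrow>
          (\<Sum>i\<in>S_k \<epsilon> n c \<tau> k. x i) = real (\<rho> ! (k - 1)))
    \<and> (\<forall>k\<in>{1..length \<tau>}. \<rho> ! (k - 1) = nat \<lceil>1 / \<epsilon>\<rceil> \<longrightarrow>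
          (\<Sum>i\<in>S_k \<epsilon> n c \<tau> k. x i) \<ge> real (\<rho> ! (k - 1)))
    \<and> (\<forall>i\<in>{2..n} - S_all \<epsilon> n c \<tau>. x i = 0)
    \<and> (\<forall>i\<in>S_all \<epsilon> n c \<tau>. 0 \<le> x i \<and> x i \<le> 1)}"

definition extreme_pt :: "(nat \<Rightarrow> real) \<Rightarrow> (nat \<Rightarrow> real) set \<Rightarrow> bool" where
  "extreme_pt x P \<longleftrightarrow> x \<in> P \<and> \<not> (\<exists>y\<in>P. \<exists>z\<in>P. y \<noteq> z \<and>
      (\<exists>t::real. 0 < t \<and> t < 1 \<and> x = (\<lambda>i. (1 - t) * y i + t * z i)))"

end

theory Submission
  imports Defs
begin

(* Call a direction d balanced at x if it is supported on the fractional coordinates of x and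
   sums to zero over every group S_k whose constraint is tight at x. Small steps from x along a
   balanced d with w^T d = 0 stay in P, so at an extreme point no such nonzero d exists, and two
   linearly independent balanced directions cannot exist either: a combination of them kills
   w^T d. Since the sum over a tight group is an integer, a fractional coordinate in a tight group
   has a fractional partner there, so every fractional coordinate carries a balanced direction.
   Hence an extreme point is integral, or has one fractional coordinate j in no tight group, or
   exactly two, i and j, in one tight group S_k with x_i + x_j = 1.

   Rounding x_j up costs at most c_j <= eps c^T x: either j lies in S_inf and c_j <= eps, or its
   group is not tight, hence holds at least 1/eps units of cost above (1+eps)^-(tau_k+k), while
   item 1 and the k-1 earlier groups (thanks to the gaps in tau) contribute k (1+eps)^-tau_k.
   Moving the mass of the pair onto the coordinate of larger weight costs at most the spread
   (1+eps)^-tau_k (1 - (1+eps)^-k) <= k eps (1+eps)^-tau_k <= eps c^T x of costs within S_k.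
   So the rounding even stays within a factor 1 + eps. *)

lemma Gamma_gap:
  assumes "\<tau> \<in> Gamma \<epsilon>" "1 \<le> l" "l < k" "k \<le> length \<tau>"
  shows "\<tau> ! (l - 1) + l \<le> \<tau> ! (k - 1)"
  using assms(3,4)
proof (induction k)
  case 0
  then show ?case by simp
next
  case (Suc k)
  have step: "\<tau> ! (k - 1) + k \<le> \<tau> ! k" if "1 \<le> k" "k < length \<tau>"
    using assms(1) that by (simp add: Gamma_def)
  show ?case
  proof (cases "l = k")
    case True
    then show ?thesis using step Suc.prems assms(2) by simp
  next
    case False
    then have "\<tau> ! (l - 1) + l \<le> \<tau> ! (k - 1)" using Suc by simp
    moreover have "\<tau> ! (k - 1) + k \<le> \<tau> ! k" using step False Suc.prems assms(2) by simp
    ultimately show ?thesis by simp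
  qed
qed

lemma inverse_power_antimono:
  fixes \<epsilon> :: real
  assumes "0 \<le> \<epsilon>" "a \<le> a'"
  shows "inverse ((1 + \<epsilon>) ^ a') \<le> inverse ((1 + \<epsilon>) ^ a)"
  using assms by (intro le_imp_inverse_le power_increasing) auto

lemma inverse_power_C_eps_le:
  assumes "0 < \<epsilon>"
  shows "inverse ((1 + \<epsilon>) ^ C_eps \<epsilon>) \<le> \<epsilon>"
proof -
  have base: "1 < 1 + \<epsilon>" using assms by simp
  have "1 / \<epsilon> = (1 + \<epsilon>) powr log (1 + \<epsilon>) (1 / \<epsilon>)" using assms by simp
  also have "\<dots> \<le> (1 + \<epsilon>) powr real (C_eps \<epsilon>)"
    using base by (intro powr_mono) (auto simp: C_eps_def intro: order_trans[OF le_of_int_ceiling])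
  also have "\<dots> = (1 + \<epsilon>) ^ C_eps \<epsilon>" using assms by (simp add: powr_realpow)
  finally show ?thesis using assms by (simp add: field_simps)
qed

lemma one_minus_le_inverse_power:
  fixes \<epsilon> :: real
  assumes "0 \<le> \<epsilon>"
  shows "1 - real k * \<epsilon> \<le> inverse ((1 + \<epsilon>) ^ k)"
proof -
  have "1 - real k * \<epsilon> \<le> 1 + real k * (- \<epsilon> / (1 + \<epsilon>))"
    using assms by (simp add: field_simps mult_left_le)
  also have "\<dots> \<le> (1 + - \<epsilon> / (1 + \<epsilon>)) ^ k"
    using assms by (intro Bernoulli_inequality) (simp add: field_simps)
  also have "1 + - \<epsilon> / (1 + \<epsilon>) = inverse (1 + \<epsilon>)"
    using assms by (simp add: field_simps)
  finally show ?thesis by (simp add: power_inverse)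
qed

lemma eventually_small_perturbation:
  fixes a b :: "'a \<Rightarrow> real"
  assumes "finite A" "\<forall>j\<in>A. 0 < a j"
  shows "\<forall>\<^sub>F \<delta> in at_right 0. \<forall>j\<in>A. \<delta> * \<bar>b j\<bar> < a j"
proof (intro eventually_ball_finite assms(1) ballI)
  fix j assume "j \<in> A"
  have "((\<lambda>\<delta>. \<delta> * \<bar>b j\<bar>) \<longlongrightarrow> 0 * \<bar>b j\<bar>) (at_right 0)" by (intro tendsto_intros)
  then show "\<forall>\<^sub>F \<delta> in at_right 0. \<delta> * \<bar>b j\<bar> < a j"
    using assms(2) \<open>j \<in> A\<close> by (auto dest: order_tendstoD(2))
qed

lemma sum_mult_fun_upd:
  fixes g f :: "'a \<Rightarrow> 'b::comm_ring"
  assumes "finite A"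
  shows "(\<Sum>i\<in>A. g i * (f(j := y)) i) = (\<Sum>i\<in>A. g i * f i) + (if j \<in> A then g j * (y - f j) else 0)"
proof (cases "j \<in> A")
  case True
  then show ?thesis using assms
    by (simp add: sum.remove[of A j] sum.cong[of "A - {j}" _ "\<lambda>i. g i * (f(j := y)) i"] algebra_simps)
next
  case False
  then show ?thesis by (auto intro: sum.cong)
qed

lemma sum_fun_upd:
  fixes f :: "'a \<Rightarrow> 'b::comm_ring_1"
  assumes "finite A"
  shows "(\<Sum>i\<in>A. (f(j := y)) i) = (\<Sum>i\<in>A. f i) + (if j \<in> A then y - f j else 0)"
  using sum_mult_fun_upd[OF assms, of "\<lambda>_. 1" f j y] by simp

lemma sum_mult_shift_mass:
  fixes g x :: "'a \<Rightarrow> 'b::comm_ring_1"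
  assumes "finite A" "i \<noteq> j" "x i + x j = 1"
  shows "(\<Sum>l\<in>A. g l * (x(i := 1, j := 0)) l) = (\<Sum>l\<in>A. g l * x l)
    + (if i \<in> A then g i * x j else 0) - (if j \<in> A then g j * x j else 0)"
proof -
  have "(\<Sum>l\<in>A. g l * (x(i := 1, j := 0)) l)
      = (\<Sum>l\<in>A. g l * (x(i := 1)) l) - (if j \<in> A then g j * x j else 0)"
    using sum_mult_fun_upd[OF assms(1), of g "x(i := 1)" j 0] assms(2) by simp
  also have "(\<Sum>l\<in>A. g l * (x(i := 1)) l) = (\<Sum>l\<in>A. g l * x l) + (if i \<in> A then g i * (1 - x i) else 0)"
    by (rule sum_mult_fun_upd[OF assms(1)])
  moreover have "1 - x i = x j" using assms(3) add_diff_cancel_left'[of "x i" "x j"] by simp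
  ultimately show ?thesis by (simp only:)
qed

locale group_polytope =
  fixes \<epsilon> b :: real and n :: nat and c w :: "nat \<Rightarrow> real" and \<tau> \<rho> :: "nat list"
  assumes eps_pos: "0 < \<epsilon>"
    and tau_Gamma: "\<tau> \<in> Gamma \<epsilon>"
    and rho_length: "length \<rho> = length \<tau>"
    and rho_range: "\<forall>k<length \<rho>. 1 \<le> \<rho> ! k \<and> \<rho> ! k \<le> nat \<lceil>1 / \<epsilon>\<rceil>"
begin

abbreviation "P \<equiv> P_poly \<epsilon> n c w b \<tau> \<rho>"
abbreviation "S k \<equiv> S_k \<epsilon> n c \<tau> k"
abbreviation "S_union \<equiv> S_all \<epsilon> n c \<tau>"
abbreviation "K \<equiv> length \<tau>"
abbreviation "R \<equiv> nat \<lceil>1 / \<epsilon>\<rceil>"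

definition frac :: "(nat \<Rightarrow> real) \<Rightarrow> nat set" where
  "frac x = {i \<in> {1..n}. 0 < x i \<and> x i < 1}"

definition tight :: "(nat \<Rightarrow> real) \<Rightarrow> nat \<Rightarrow> bool" where
  "tight x k \<longleftrightarrow> (\<Sum>i\<in>S k. x i) = real (\<rho> ! (k - 1))"

definition free :: "(nat \<Rightarrow> real) \<Rightarrow> nat \<Rightarrow> bool" where
  "free x i \<longleftrightarrow> (\<forall>k\<in>{1..K}. i \<in> S k \<longrightarrow> \<not> tight x k)"

definition balanced :: "(nat \<Rightarrow> real) \<Rightarrow> (nat \<Rightarrow> real) \<Rightarrow> bool" where
  "balanced x d \<longleftrightarrow> (\<forall>i. d i \<noteq> 0 \<longrightarrow> i \<in> frac x) \<and> (\<forall>k\<in>{1..K}. tight x k \<longrightarrow> (\<Sum>i\<in>S k. d i) = 0)"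

lemma S_subset: "S k \<subseteq> {2..n}"
  by (auto simp: S_k_def)

lemma finite_S: "finite (S k)"
  using finite_subset[OF S_subset] by blast

lemma S_disjoint:
  assumes "k \<in> {1..K}" "k' \<in> {1..K}" "i \<in> S k" "i \<in> S k'"
  shows "k = k'"
proof (rule ccontr)
  have no_overlap: False if "1 \<le> l" "l < m" "m \<le> K" "i \<in> S l" "i \<in> S m" for l m
  proof -
    have "inverse ((1 + \<epsilon>) ^ (\<tau> ! (m - 1)))
        \<le> inverse ((1 + \<epsilon>) ^ min (\<tau> ! (l - 1) + l) (C_eps \<epsilon>))"
      using eps_pos Gamma_gap[OF tau_Gamma that(1-3)] by (intro inverse_power_antimono) auto
    with that(4,5) show False by (simp add: S_k_def)
  qed
  assume "k \<noteq> k'"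
  then show False using no_overlap assms by (cases "k < k'") (auto simp: not_less_iff_gr_or_eq)
qed

lemma S_all_subset: "S_union \<subseteq> {2..n}"
  by (auto simp: S_all_def S_inf_def S_k_def)

lemma rho_bounds: "k \<in> {1..K} \<Longrightarrow> 1 \<le> \<rho> ! (k - 1) \<and> \<rho> ! (k - 1) \<le> R"
  using rho_range rho_length by auto

lemma P_memD:
  assumes "x \<in> P"
  shows "\<And>i. i \<notin> {1..n} \<Longrightarrow> x i = 0" and "x 1 = 1" and "b \<le> (\<Sum>i=1..n. w i * x i)"
    and "\<And>k. k \<in> {1..K} \<Longrightarrow> \<rho> ! (k - 1) < R \<Longrightarrow> tight x k"
    and "\<And>k. k \<in> {1..K} \<Longrightarrow> real (\<rho> ! (k - 1)) \<le> (\<Sum>i\<in>S k. x i)"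
    and "\<And>i. i \<in> {2..n} - S_union \<Longrightarrow> x i = 0"
    and "\<And>i. i \<in> S_union \<Longrightarrow> 0 \<le> x i \<and> x i \<le> 1"
proof -
  show "real (\<rho> ! (k - 1)) \<le> (\<Sum>i\<in>S k. x i)" if "k \<in> {1..K}" for k
    using assms rho_bounds[OF that] that unfolding P_poly_def
    by (cases "\<rho> ! (k - 1) < R") (auto simp: nless_le)
qed (use assms in \<open>auto simp: P_poly_def tight_def\<close>)

lemma P_mem_unit_interval:
  assumes "x \<in> P" "i \<in> {1..n}"
  shows "0 \<le> x i \<and> x i \<le> 1"
  using P_memD[OF assms(1)] assms(2)
  by (cases "i = 1"; cases "i \<in> S_union") (auto simp: Suc_le_eq)

lemma not_tight_rho_eq_R:
  assumes "x \<in> P" "k \<in> {1..K}" "\<not> tight x k"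
  shows "\<rho> ! (k - 1) = R"
  using P_memD(4)[OF assms(1,2)] rho_bounds[OF assms(2)] assms(3) by force

lemma P_memI:
  assumes "x \<in> P"
    and changed: "\<And>i. y i \<noteq> x i \<Longrightarrow> i \<in> S_union"
    and box: "\<And>i. i \<in> S_union \<Longrightarrow> 0 \<le> y i \<and> y i \<le> 1"
    and knapsack: "b \<le> (\<Sum>i=1..n. w i * y i)"
    and groups: "\<And>k. k \<in> {1..K} \<Longrightarrow> real (\<rho> ! (k - 1)) \<le> (\<Sum>i\<in>S k. y i)"
    and tight_groups: "\<And>k. k \<in> {1..K} \<Longrightarrow> tight x k \<Longrightarrow> tight y k"
  shows "y \<in> P"
proof -
  have same: "y i = x i" if "i \<notin> S_union" for i
    using changed that by blast
  have outside: "y i = x i" if "i \<notin> {2..n}" for i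
    using same that S_all_subset by blast
  show ?thesis
    unfolding P_poly_def
  proof (intro CollectI conjI ballI allI impI)
    show "y i = 0" if "i \<notin> {1..n}" for i
      using outside[of i] P_memD(1)[OF assms(1) that] that by force
    show "y 1 = 1" using outside[of 1] P_memD(2)[OF assms(1)] by simp
    show "y i = 0" if "i \<in> {2..n} - S_union" for i
      using same P_memD(6)[OF assms(1) that] that by auto
    show "(\<Sum>i\<in>S k. y i) = real (\<rho> ! (k - 1))" if "k \<in> {1..K}" "\<rho> ! (k - 1) < R" for k
      using tight_groups P_memD(4)[OF assms(1)] that by (auto simp: tight_def)
  qed (use box knapsack groups in force)+
qed

lemma frac_subset_S_all:
  assumes "x \<in> P"
  shows "frac x \<subseteq> S_union"
proof
  fix i assume i: "i \<in> frac x"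
  then have "i \<in> {2..n}" using P_memD(2)[OF assms] by (cases "i = 1") (auto simp: frac_def)
  with i show "i \<in> S_union" using P_memD(6)[OF assms] by (force simp: frac_def)
qed

lemma not_frac_01:
  assumes "x \<in> P" "i \<in> {1..n}" "i \<notin> frac x"
  shows "x i = 0 \<or> x i = 1"
  using P_mem_unit_interval[OF assms(1,2)] assms(2,3) by (auto simp: frac_def)

lemma tight_frac_sum_Ints:
  assumes "x \<in> P" "tight x k"
  shows "(\<Sum>i\<in>S k \<inter> frac x. x i) \<in> \<int>"
proof -
  have "(\<Sum>i\<in>S k - frac x. x i) \<in> \<int>"
  proof (intro Ints_sum)
    fix i assume i: "i \<in> S k - frac x"
    then have "i \<in> {1..n}" using S_subset[of k] by auto
    then have "x i = 0 \<or> x i = 1" using not_frac_01[OF assms(1)] i by blast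
    then show "x i \<in> \<int>" by auto
  qed
  moreover have "(\<Sum>i\<in>S k. x i) = (\<Sum>i\<in>S k \<inter> frac x. x i) + (\<Sum>i\<in>S k - frac x. x i)"
    by (rule sum.Int_Diff[OF finite_S])
  ultimately show ?thesis
    using assms(2) unfolding tight_def by (metis Ints_diff Ints_of_nat add_diff_cancel_right')
qed

lemma tight_frac_partner:
  assumes "x \<in> P" "tight x k" "i \<in> S k \<inter> frac x"
  obtains j where "j \<in> S k \<inter> frac x" "j \<noteq> i"
proof -
  have "S k \<inter> frac x \<noteq> {i}"
  proof
    assume "S k \<inter> frac x = {i}"
    then have "x i \<in> \<int>" using tight_frac_sum_Ints[OF assms(1,2)] by simp
    moreover have "0 < x i" "x i < 1" using assms(3) by (auto simp: frac_def)
    ultimately show False using Ints_nonzero_abs_less1[of "x i"] by simp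
  qed
  with assms(3) that show ?thesis by blast
qed

lemma tight_frac_pair_sum:
  assumes "x \<in> P" "tight x k" "S k \<inter> frac x = {i, j}" "i \<noteq> j"
  shows "x i + x j = 1"
proof -
  have "x i + x j \<in> \<int>" using tight_frac_sum_Ints[OF assms(1,2)] assms(3,4) by simp
  moreover have "0 < x i" "x i < 1" "0 < x j" "x j < 1" using assms(3) by (auto simp: frac_def)
  ultimately show ?thesis using Ints_nonzero_abs_less1[of "x i + x j - 1"] by (simp add: abs_less_iff)
qed

lemma balanced_scale: "balanced x d \<Longrightarrow> balanced x (\<lambda>i. t * d i)"
  by (simp add: balanced_def sum_distrib_left[symmetric])

lemma balanced_step_mem:
  assumes "x \<in> P" "balanced x d" "(\<Sum>i=1..n. w i * d i) = 0"
    and small_coord: "\<And>i. i \<in> frac x \<Longrightarrow> \<bar>d i\<bar> \<le> min (x i) (1 - x i)"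
    and small_group: "\<And>k. k \<in> {1..K} \<Longrightarrow> \<not> tight x k
      \<Longrightarrow> \<bar>\<Sum>i\<in>S k. d i\<bar> \<le> (\<Sum>i\<in>S k. x i) - real (\<rho> ! (k - 1))"
  shows "(\<lambda>i. x i + d i) \<in> P"
proof (rule P_memI[OF assms(1)])
  have d_frac: "i \<in> frac x" if "d i \<noteq> 0" for i
    using assms(2) that by (simp add: balanced_def)
  show "i \<in> S_union" if "x i + d i \<noteq> x i" for i
    using d_frac frac_subset_S_all[OF assms(1)] that by auto
  show "0 \<le> x i + d i \<and> x i + d i \<le> 1" if "i \<in> S_union" for i
    using P_memD(7)[OF assms(1) that] small_coord[OF d_frac, of i]
    by (cases "d i = 0") (auto simp: abs_le_iff)
  show "b \<le> (\<Sum>i=1..n. w i * (x i + d i))"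
    using P_memD(3)[OF assms(1)] assms(3) by (simp add: distrib_left sum.distrib)
  have group_sum: "(\<Sum>i\<in>S k. x i + d i) = (\<Sum>i\<in>S k. x i) + (\<Sum>i\<in>S k. d i)" for k
    by (rule sum.distrib)
  show "tight (\<lambda>i. x i + d i) k" if "k \<in> {1..K}" "tight x k" for k
    using assms(2) that group_sum[of k] by (simp add: balanced_def tight_def)
  show "real (\<rho> ! (k - 1)) \<le> (\<Sum>i\<in>S k. x i + d i)" if k: "k \<in> {1..K}" for k
  proof (cases "tight x k")
    case True
    then show ?thesis using assms(2) k group_sum[of k] by (simp add: balanced_def tight_def)
  next
    case False
    then show ?thesis using small_group[OF k False] group_sum[of k] by (simp add: abs_le_iff)
  qed
qed

lemma not_extreme_if_balanced:
  assumes "x \<in> P" "balanced x d" "(\<Sum>i=1..n. w i * d i) = 0" "d j \<noteq> 0"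
  shows "\<not> extreme_pt x P"
proof -
  define slack where "slack k = (\<Sum>i\<in>S k. x i) - real (\<rho> ! (k - 1))" for k
  have "finite {k \<in> {1..K}. \<not> tight x k}" "finite (frac x)" by (auto simp: frac_def)
  moreover have "\<forall>k\<in>{k \<in> {1..K}. \<not> tight x k}. 0 < slack k"
    using P_memD(5)[OF assms(1)] by (force simp: slack_def tight_def)
  moreover have "\<forall>i\<in>frac x. 0 < min (x i) (1 - x i)" by (auto simp: frac_def)
  ultimately have "\<forall>\<^sub>F \<delta> in at_right 0. 0 < \<delta>
      \<and> (\<forall>k\<in>{k \<in> {1..K}. \<not> tight x k}. \<delta> * \<bar>\<Sum>i\<in>S k. d i\<bar> < slack k)
      \<and> (\<forall>i\<in>frac x. \<delta> * \<bar>d i\<bar> < min (x i) (1 - x i))"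
    by (intro eventually_conj eventually_at_right_less eventually_small_perturbation)
  then obtain \<delta> where \<delta>: "0 < \<delta>"
    "\<And>k. k \<in> {1..K} \<Longrightarrow> \<not> tight x k \<Longrightarrow> \<delta> * \<bar>\<Sum>i\<in>S k. d i\<bar> < slack k"
    "\<And>i. i \<in> frac x \<Longrightarrow> \<delta> * \<bar>d i\<bar> < min (x i) (1 - x i)"
    using eventually_happens'[OF trivial_limit_at_right_real] by blast
  have moved: "(\<lambda>i. x i + s * \<delta> * d i) \<in> P" if s: "\<bar>s\<bar> = 1" for s
  proof (rule balanced_step_mem[OF assms(1) balanced_scale[OF assms(2)]])
    have scaled: "\<bar>s * \<delta> * t\<bar> = \<delta> * \<bar>t\<bar>" for t
      using s \<delta>(1) by (simp add: abs_mult)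
    show "(\<Sum>i=1..n. w i * (s * \<delta> * d i)) = 0"
      using assms(3) by (simp add: algebra_simps sum_distrib_left[symmetric])
    show "\<bar>s * \<delta> * d i\<bar> \<le> min (x i) (1 - x i)" if "i \<in> frac x" for i
      using \<delta>(3)[OF that] scaled[of "d i"] by simp
    show "\<bar>\<Sum>i\<in>S k. s * \<delta> * d i\<bar> \<le> (\<Sum>i\<in>S k. x i) - real (\<rho> ! (k - 1))"
      if "k \<in> {1..K}" "\<not> tight x k" for k
      using \<delta>(2)[OF that] scaled[of "\<Sum>i\<in>S k. d i"] by (simp add: slack_def sum_distrib_left[symmetric])
  qed
  let ?y = "\<lambda>i. x i + (- 1) * \<delta> * d i" and ?z = "\<lambda>i. x i + 1 * \<delta> * d i"
  have "?y j \<noteq> ?z j" using \<delta>(1) assms(4) by simp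
  then have "?y \<noteq> ?z" by metis
  moreover have "x = (\<lambda>i. (1 - 1 / 2) * ?y i + 1 / 2 * ?z i)" by (simp add: algebra_simps)
  ultimately have "\<exists>y\<in>P. \<exists>z\<in>P. y \<noteq> z \<and> (\<exists>t. 0 < t \<and> t < 1 \<and> x = (\<lambda>i. (1 - t) * y i + t * z i))"
    by (intro bexI[OF _ moved[of "-1"]] bexI[OF _ moved[of 1]] conjI exI[of _ "1/2"]) auto
  then show ?thesis unfolding extreme_pt_def by blast
qed

lemma balanced_lincomb:
  assumes "balanced x d" "balanced x e"
  shows "balanced x (\<lambda>i. \<alpha> * d i + \<beta> * e i)"
proof -
  have "(\<Sum>i\<in>S k. \<alpha> * d i + \<beta> * e i) = \<alpha> * (\<Sum>i\<in>S k. d i) + \<beta> * (\<Sum>i\<in>S k. e i)" for k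
    by (simp add: sum.distrib sum_distrib_left)
  moreover have "d i \<noteq> 0 \<or> e i \<noteq> 0" if "\<alpha> * d i + \<beta> * e i \<noteq> 0" for i
    using that by auto
  ultimately show ?thesis using assms unfolding balanced_def by (metis add.right_neutral mult_zero_right)
qed

lemma balanced_unit:
  assumes "i \<in> frac x" "free x i"
  shows "balanced x (\<lambda>t. if t = i then 1 else 0)"
  using assms finite_S by (auto simp: balanced_def free_def)

lemma balanced_pair:
  assumes "k \<in> {1..K}" "i \<in> S k \<inter> frac x" "j \<in> S k \<inter> frac x"
  shows "balanced x (\<lambda>t. (if t = i then 1 else 0) - (if t = j then 1 else 0))"
proof -
  have "i \<in> S k' \<longleftrightarrow> j \<in> S k'" if "k' \<in> {1..K}" for k'
    using S_disjoint[OF assms(1) that] assms by blast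
  then show ?thesis
    using assms finite_S by (auto simp: balanced_def sum_subtractf)
qed

lemma balanced_through:
  assumes "x \<in> P" "m \<in> frac x"
  obtains d where "balanced x d" "d m \<noteq> 0"
proof (cases "free x m")
  case True
  then show ?thesis using that balanced_unit[OF assms(2)] by fastforce
next
  case False
  then obtain k where k: "k \<in> {1..K}" "m \<in> S k" "tight x k" by (auto simp: free_def)
  then obtain j where "j \<in> S k \<inter> frac x" "j \<noteq> m"
    using tight_frac_partner[OF assms(1)] assms(2) by blast
  then show ?thesis using that balanced_pair[OF k(1)] k(2) assms(2) by fastforce
qed

lemma not_extreme_if_two_balanced:
  assumes "x \<in> P" "balanced x d" "balanced x e" "d p \<noteq> 0" "d q = 0" "e q \<noteq> 0"
  shows "\<not> extreme_pt x P"
proof (cases "(\<Sum>i=1..n. w i * d i) = 0")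
  case True
  then show ?thesis using not_extreme_if_balanced assms(1,2,4) by blast
next
  case False
  define \<alpha> where "\<alpha> = (\<Sum>i=1..n. w i * e i)"
  define \<beta> where "\<beta> = - (\<Sum>i=1..n. w i * d i)"
  have "(\<Sum>i=1..n. w i * (\<alpha> * d i + \<beta> * e i))
      = \<alpha> * (\<Sum>i=1..n. w i * d i) + \<beta> * (\<Sum>i=1..n. w i * e i)"
    by (simp add: algebra_simps sum.distrib sum_distrib_left)
  then have "(\<Sum>i=1..n. w i * (\<alpha> * d i + \<beta> * e i)) = 0" by (simp add: \<alpha>_def \<beta>_def)
  moreover have "\<alpha> * d q + \<beta> * e q \<noteq> 0" using False assms(5,6) by (simp add: \<beta>_def)
  ultimately show ?thesis
    using not_extreme_if_balanced[OF assms(1) balanced_lincomb[OF assms(2,3)]] by blast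
qed

lemma extreme_frac_support:
  assumes "extreme_pt x P" "balanced x d" "d i \<noteq> 0"
  shows "frac x \<subseteq> {t. d t \<noteq> 0}"
proof
  fix m assume m: "m \<in> frac x"
  have "x \<in> P" using assms(1) by (simp add: extreme_pt_def)
  obtain e where "balanced x e" "e m \<noteq> 0" using balanced_through[OF \<open>x \<in> P\<close> m] .
  then show "m \<in> {t. d t \<noteq> 0}"
    using not_extreme_if_two_balanced[OF \<open>x \<in> P\<close> assms(2)] assms by blast
qed

lemma extreme_frac_cases:
  assumes "extreme_pt x P"
  obtains "frac x = {}"
  | j where "frac x = {j}" "free x j"
  | k i j where "k \<in> {1..K}" "tight x k" "i \<in> S k" "j \<in> S k" "i \<noteq> j" "frac x = {i, j}"
proof -
  have xP: "x \<in> P" using assms by (simp add: extreme_pt_def)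
  consider "frac x = {}" | i where "i \<in> frac x" "free x i" | i where "i \<in> frac x" "\<not> free x i"
    by blast
  then show thesis
  proof cases
    case (2 i)
    then have "frac x \<subseteq> {i}"
      using extreme_frac_support[OF assms balanced_unit[OF 2], of i] by (auto split: if_splits)
    then show thesis using that(2) 2 by blast
  next
    case (3 i)
    then obtain k where k: "k \<in> {1..K}" "i \<in> S k" "tight x k" by (auto simp: free_def)
    then obtain j where j: "j \<in> S k \<inter> frac x" "j \<noteq> i"
      using tight_frac_partner[OF xP] 3(1) by blast
    define d :: "nat \<Rightarrow> real" where "d t = (if t = i then 1 else 0) - (if t = j then 1 else 0)" for t
    have "balanced x d" unfolding d_def using balanced_pair[OF k(1) _ j(1)] k(2) 3(1) by blast
    moreover have "d i \<noteq> 0" using j(2) by (simp add: d_def)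
    ultimately have "frac x \<subseteq> {t. d t \<noteq> 0}" by (rule extreme_frac_support[OF assms])
    then have "frac x \<subseteq> {i, j}" by (auto simp: d_def split: if_splits)
    then show thesis using that(3)[OF k(1,3,2)] j 3(1) by blast
  qed (use that in blast)
qed

abbreviation \<theta> :: "nat \<Rightarrow> real" where "\<theta> l \<equiv> inverse ((1 + \<epsilon>) ^ l)"

lemma S_cost_bounds:
  assumes "i \<in> S k"
  shows "\<theta> (\<tau> ! (k - 1)) * \<theta> k \<le> c i" "c i \<le> \<theta> (\<tau> ! (k - 1))"
proof -
  have "\<theta> (\<tau> ! (k - 1) + k) \<le> \<theta> (min (\<tau> ! (k - 1) + k) (C_eps \<epsilon>))"
    using eps_pos by (intro inverse_power_antimono) auto
  then show "\<theta> (\<tau> ! (k - 1)) * \<theta> k \<le> c i"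
    using assms by (simp add: S_k_def power_add)
  show "c i \<le> \<theta> (\<tau> ! (k - 1))" using assms by (simp add: S_k_def)
qed

end

locale knapsack_polytope = group_polytope +
  assumes n_pos: "1 \<le> n"
    and c_nonneg: "\<forall>i\<in>{1..n}. 0 \<le> c i"
    and w_nonneg: "\<forall>i\<in>{1..n}. 0 \<le> w i"
    and c_1: "c 1 = 1"
begin

abbreviation cost :: "(nat \<Rightarrow> real) \<Rightarrow> real" where "cost x \<equiv> \<Sum>i=1..n. c i * x i"

lemma cost_terms_nonneg: "x \<in> P \<Longrightarrow> i \<in> {1..n} \<Longrightarrow> 0 \<le> c i * x i"
  using P_mem_unit_interval c_nonneg by simp

lemma cost_ge_1:
  assumes "x \<in> P"
  shows "1 \<le> cost x"
proof -
  have "c 1 * x 1 \<le> cost x"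
    using cost_terms_nonneg[OF assms] n_pos by (intro member_le_sum) auto
  then show ?thesis using c_1 P_memD(2)[OF assms] by simp
qed

lemma group_cost_ge:
  assumes "x \<in> P"
  shows "\<theta> (\<tau> ! (k - 1)) * \<theta> k * (\<Sum>i\<in>S k. x i) \<le> (\<Sum>i\<in>S k. c i * x i)"
  unfolding sum_distrib_left
proof (rule sum_mono)
  fix i assume i: "i \<in> S k"
  then have "0 \<le> x i" using P_mem_unit_interval[OF assms] S_subset by fastforce
  then show "\<theta> (\<tau> ! (k - 1)) * \<theta> k * x i \<le> c i * x i"
    using S_cost_bounds(1)[OF i] by (rule mult_right_mono[rotated])
qed

lemma earlier_group_cost_ge:
  assumes "x \<in> P" "1 \<le> l" "l < k" "k \<le> K"
  shows "\<theta> (\<tau> ! (k - 1)) \<le> (\<Sum>i\<in>S l. c i * x i)"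
proof -
  have l: "l \<in> {1..K}" using assms by simp
  have "\<theta> (\<tau> ! (k - 1)) \<le> \<theta> (\<tau> ! (l - 1) + l)"
    using eps_pos Gamma_gap[OF tau_Gamma assms(2-4)] by (intro inverse_power_antimono) auto
  also have "\<dots> \<le> \<theta> (\<tau> ! (l - 1)) * \<theta> l * (\<Sum>i\<in>S l. x i)"
    using P_memD(5)[OF assms(1) l] rho_bounds[OF l] eps_pos
    by (simp add: power_add)
  also have "\<dots> \<le> (\<Sum>i\<in>S l. c i * x i)" by (rule group_cost_ge[OF assms(1)])
  finally show ?thesis .
qed

lemma cost_ge_groups:
  assumes "x \<in> P" "k \<in> {1..K}"
  shows "real k * \<theta> (\<tau> ! (k - 1)) + (\<Sum>i\<in>S k. c i * x i) \<le> cost x"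
proof -
  define V where "V = (\<Union>l\<in>{1..k}. S l)"
  have V: "V \<subseteq> {2..n}" "finite V" unfolding V_def using S_subset finite_S by auto
  have disjoint: "S l \<inter> S l' = {}" if "l \<in> {1..k}" "l' \<in> {1..k}" "l \<noteq> l'" for l l'
    using S_disjoint[of l l'] that assms(2) by auto
  have "(\<Sum>l\<in>{1..<k}. \<theta> (\<tau> ! (k - 1))) \<le> (\<Sum>l\<in>{1..<k}. \<Sum>i\<in>S l. c i * x i)"
    using earlier_group_cost_ge[OF assms(1)] assms(2) by (intro sum_mono) auto
  then have "real (k - 1) * \<theta> (\<tau> ! (k - 1)) \<le> (\<Sum>l\<in>{1..<k}. \<Sum>i\<in>S l. c i * x i)"
    by simp
  moreover have "(\<Sum>i\<in>V. c i * x i) = (\<Sum>l\<in>{1..k}. \<Sum>i\<in>S l. c i * x i)"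
    unfolding V_def using disjoint finite_S by (intro sum.UNION_disjoint) auto
  moreover have "{1..k} = insert k {1..<k}" using assms(2) by auto
  moreover have "c 1 * x 1 + (\<Sum>i\<in>V. c i * x i) \<le> cost x"
  proof -
    have "c 1 * x 1 + (\<Sum>i\<in>V. c i * x i) = (\<Sum>i\<in>insert 1 V. c i * x i)"
      using V by (subst sum.insert) auto
    also have "\<dots> \<le> cost x"
      using V n_pos cost_terms_nonneg[OF assms(1)] by (intro sum_mono2) auto
    finally show ?thesis .
  qed
  moreover have "\<theta> (\<tau> ! (k - 1)) \<le> 1 * x 1"
    using P_memD(2)[OF assms(1)] eps_pos by (simp add: inverse_le_1_iff one_le_power)
  moreover have "real k * \<theta> (\<tau> ! (k - 1)) = real (k - 1) * \<theta> (\<tau> ! (k - 1)) + \<theta> (\<tau> ! (k - 1))"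
    using assms(2) by (simp add: of_nat_diff algebra_simps)
  ultimately show ?thesis using c_1 by (simp add: sum.insert)
qed

lemma free_frac_cost_le:
  assumes "x \<in> P" "j \<in> frac x" "free x j"
  shows "c j \<le> \<epsilon> * cost x"
proof -
  have "j \<in> S_union" using frac_subset_S_all[OF assms(1)] assms(2) by blast
  then consider (group) k where "k \<in> {1..K}" "j \<in> S k" | (tail) "j \<in> S_inf \<epsilon> n c \<tau>"
    by (auto simp: S_all_def)
  then show ?thesis
  proof cases
    case tail
    then have "c j \<le> \<theta> (C_eps \<epsilon>)" by (simp add: S_inf_def)
    also have "\<dots> \<le> \<epsilon>" by (rule inverse_power_C_eps_le[OF eps_pos])
    also have "\<dots> \<le> \<epsilon> * cost x" using cost_ge_1[OF assms(1)] eps_pos by simp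
    finally show ?thesis .
  next
    case (group k)
    define u where "u = \<theta> (\<tau> ! (k - 1))"
    define v where "v = \<theta> k"
    have u_pos: "0 < u" and v_pos: "0 < v" using eps_pos by (simp_all add: u_def v_def)
    have "\<not> tight x k" using assms(3) group by (simp add: free_def)
    then have "real R \<le> (\<Sum>i\<in>S k. x i)"
      using P_memD(5)[OF assms(1) group(1)] not_tight_rho_eq_R[OF assms(1) group(1)] by simp
    then have "1 / \<epsilon> \<le> (\<Sum>i\<in>S k. x i)" by linarith
    then have "u * v * (1 / \<epsilon>) \<le> u * v * (\<Sum>i\<in>S k. x i)"
      using u_pos v_pos by (intro mult_left_mono) auto
    also have "\<dots> \<le> (\<Sum>i\<in>S k. c i * x i)" unfolding u_def v_def by (rule group_cost_ge[OF assms(1)])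
    finally have "real k * u + u * v / \<epsilon> \<le> cost x"
      using cost_ge_groups[OF assms(1) group(1)] by (simp add: u_def)
    moreover have "u * (1 - real k * \<epsilon>) \<le> u * v"
      using one_minus_le_inverse_power eps_pos u_pos by (simp add: v_def)
    ultimately have "u \<le> \<epsilon> * cost x"
      using eps_pos by (simp add: field_simps)
    then show ?thesis using S_cost_bounds(2)[OF group(2)] u_pos by (simp add: u_def)
  qed
qed

lemma group_cost_spread:
  assumes "x \<in> P" "k \<in> {1..K}" "i \<in> S k" "j \<in> S k"
  shows "c i - c j \<le> \<epsilon> * cost x"
proof -
  define u where "u = \<theta> (\<tau> ! (k - 1))"
  have u_pos: "0 < u" using eps_pos by (simp add: u_def)
  have "c i - c j \<le> u * (1 - \<theta> k)"
    using S_cost_bounds[OF assms(3)] S_cost_bounds[OF assms(4)] by (simp add: u_def algebra_simps)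
  also have "\<dots> \<le> u * (real k * \<epsilon>)"
    using one_minus_le_inverse_power[of \<epsilon> k] eps_pos u_pos by (intro mult_left_mono) auto
  also have "\<dots> \<le> \<epsilon> * cost x"
  proof -
    have "0 \<le> (\<Sum>i\<in>S k. c i * x i)"
      using cost_terms_nonneg[OF assms(1)] S_subset by (intro sum_nonneg) fastforce
    then have "real k * u \<le> cost x" using cost_ge_groups[OF assms(1,2)] by (simp add: u_def)
    then show ?thesis using eps_pos by (simp add: algebra_simps)
  qed
  finally show ?thesis .
qed

lemma round_single_frac:
  assumes "x \<in> P" "frac x = {j}" "free x j"
  shows "\<exists>y\<in>P. (\<forall>i\<in>{1..n}. y i \<in> {0, 1}) \<and> cost y \<le> (1 + \<epsilon>) * cost x"
proof (intro bexI conjI ballI)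
  let ?y = "x(j := 1)"
  have j: "j \<in> frac x" using assms(2) by simp
  then have j_range: "j \<in> S_union" "j \<in> {1..n}" "0 < x j" "x j < 1"
    using frac_subset_S_all[OF assms(1)] by (auto simp: frac_def)
  have group_sum: "(\<Sum>i\<in>S k. ?y i) = (\<Sum>i\<in>S k. x i) + (if j \<in> S k then 1 - x j else 0)" for k
    by (rule sum_fun_upd[OF finite_S])
  show "?y \<in> P"
  proof (rule P_memI[OF assms(1)])
    show "l \<in> S_union" if "?y l \<noteq> x l" for l
      using that j_range by (cases "l = j") auto
    have "0 \<le> w j * (1 - x j)" using w_nonneg j_range by simp
    then show "b \<le> (\<Sum>i=1..n. w i * ?y i)"
      using P_memD(3)[OF assms(1)] sum_mult_fun_upd[of "{1..n}" w x j 1] j_range by simp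
    show "real (\<rho> ! (k - 1)) \<le> (\<Sum>i\<in>S k. ?y i)" if "k \<in> {1..K}" for k
      using P_memD(5)[OF assms(1) that] group_sum[of k] j_range by auto
    show "tight ?y k" if "k \<in> {1..K}" "tight x k" for k
      using assms(3) that group_sum[of k] by (auto simp: free_def tight_def)
  qed (use P_memD(7)[OF assms(1)] j_range in auto)
  show "?y i \<in> {0, 1}" if "i \<in> {1..n}" for i
    using not_frac_01[OF assms(1) that] assms(2) by auto
  have "cost ?y = cost x + c j * (1 - x j)"
    using sum_mult_fun_upd[of "{1..n}" c x j 1] j_range by simp
  also have "\<dots> \<le> cost x + c j"
    using c_nonneg j_range by (simp add: mult_left_le)
  also have "\<dots> \<le> (1 + \<epsilon>) * cost x"
    using free_frac_cost_le[OF assms(1) j assms(3)] by (simp add: algebra_simps)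
  finally show "cost ?y \<le> (1 + \<epsilon>) * cost x" .
qed

lemma round_frac_pair:
  assumes "x \<in> P" "k \<in> {1..K}" "tight x k" "i \<in> S k" "j \<in> S k" "i \<noteq> j"
    and frac: "frac x = {i, j}" and "w j \<le> w i"
  shows "\<exists>y\<in>P. (\<forall>l\<in>{1..n}. y l \<in> {0, 1}) \<and> cost y \<le> (1 + \<epsilon>) * cost x"
proof (intro bexI conjI ballI)
  let ?y = "x(i := 1, j := 0)"
  have ij: "i \<in> S_union" "j \<in> S_union" "i \<in> {1..n}" "j \<in> {1..n}" "0 < x j" "x j < 1"
    using frac_subset_S_all[OF assms(1)] frac by (auto simp: frac_def)
  have "S k \<inter> frac x = {i, j}" using frac assms(4,5) by auto
  then have "x i + x j = 1" using tight_frac_pair_sum[OF assms(1,3) _ assms(6)] by blast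
  then have updated_sum: "(\<Sum>l\<in>A. g l * ?y l) = (\<Sum>l\<in>A. g l * x l)
      + (if i \<in> A then g i * x j else 0) - (if j \<in> A then g j * x j else 0)"
    if "finite A" for A g
    by (rule sum_mult_shift_mass[OF that assms(6)])
  have group_sum: "(\<Sum>l\<in>S k'. ?y l) = (\<Sum>l\<in>S k'. x l)" if "k' \<in> {1..K}" for k'
  proof -
    have "i \<in> S k' \<longleftrightarrow> j \<in> S k'" using S_disjoint[OF assms(2) that] assms(4,5) by blast
    then show ?thesis using updated_sum[OF finite_S, of "\<lambda>_. 1" k'] by simp
  qed
  show "?y \<in> P"
  proof (rule P_memI[OF assms(1)])
    have "(\<Sum>l=1..n. w l * ?y l) = (\<Sum>l=1..n. w l * x l) + (w i - w j) * x j"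
      using updated_sum[of "{1..n}" w] ij by (simp add: left_diff_distrib)
    moreover have "0 \<le> (w i - w j) * x j" using assms(8) ij by simp
    ultimately show "b \<le> (\<Sum>l=1..n. w l * ?y l)" using P_memD(3)[OF assms(1)] by simp
    show "l \<in> S_union" if "?y l \<noteq> x l" for l
      using that ij by (cases "l = i \<or> l = j") auto
  qed (use P_memD(5,7)[OF assms(1)] group_sum ij in \<open>auto simp: tight_def\<close>)
  show "?y l \<in> {0, 1}" if "l \<in> {1..n}" for l
    using not_frac_01[OF assms(1) that] frac by auto
  have "cost ?y = cost x + (c i - c j) * x j"
    using updated_sum[of "{1..n}" c] ij by (simp add: left_diff_distrib)
  also have "\<dots> \<le> cost x + \<epsilon> * cost x"
  proof -
    have "(c i - c j) * x j \<le> max 0 (c i - c j)"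
      using ij by (cases "c i \<le> c j") (auto simp: mult_nonpos_nonneg mult_left_le)
    also have "\<dots> \<le> \<epsilon> * cost x"
      using group_cost_spread[OF assms(1,2,4,5)] cost_ge_1[OF assms(1)] eps_pos by simp
    finally show ?thesis by simp
  qed
  finally show "cost ?y \<le> (1 + \<epsilon>) * cost x" by (simp add: algebra_simps)
qed

lemma extreme_point_rounding:
  assumes "extreme_pt x P"
  shows "\<exists>y\<in>P. (\<forall>i\<in>{1..n}. y i \<in> {0, 1}) \<and> cost y \<le> (1 + \<epsilon>) * cost x"
proof -
  have xP: "x \<in> P" using assms by (simp add: extreme_pt_def)
  from assms show ?thesis
  proof (cases rule: extreme_frac_cases)
    case 1
    then have "\<forall>i\<in>{1..n}. x i \<in> {0, 1}" using not_frac_01[OF xP] by auto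
    moreover have "cost x \<le> (1 + \<epsilon>) * cost x" using cost_ge_1[OF xP] eps_pos by simp
    ultimately show ?thesis using xP by blast
  next
    case (2 j)
    then show ?thesis by (rule round_single_frac[OF xP])
  next
    case (3 k i j)
    show ?thesis
    proof (cases "w j \<le> w i")
      case True
      then show ?thesis using round_frac_pair[OF xP 3] by blast
    next
      case False
      then show ?thesis using round_frac_pair[OF xP 3(1,2,4,3) 3(5)[symmetric]] 3(6) by (simp add: insert_commute)
    qed
  qed
qed

end

theorem lemma4:
  fixes \<epsilon> b :: real and n :: nat and c w :: "nat \<Rightarrow> real"
    and \<tau> \<rho> :: "nat list" and xs :: "nat \<Rightarrow> real"
  assumes eps: "0 < \<epsilon>" "\<epsilon> \<le> 1 / 256"
    and n: "1 \<le> n"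
    and c_nonneg: "\<forall>i\<in>{1..n}. 0 \<le> c i"
    and w_nonneg: "\<forall>i\<in>{1..n}. 0 \<le> w i"
    and c1: "c 1 = 1"
    and c_sorted: "\<forall>i\<in>{1..n}. \<forall>j\<in>{1..n}. i \<le> j \<longrightarrow> c j \<le> c i"
    and tau: "\<tau> \<in> Gamma \<epsilon>"
    and rho_len: "length \<rho> = length \<tau>"
    and rho_range: "\<forall>k<length \<rho>. 1 \<le> \<rho> ! k \<and> \<rho> ! k \<le> nat \<lceil>1 / \<epsilon>\<rceil>"
    and ext: "extreme_pt xs (P_poly \<epsilon> n c w b \<tau> \<rho>)"
  shows "\<exists>xb\<in>P_poly \<epsilon> n c w b \<tau> \<rho>. (\<forall>i\<in>{1..n}. xb i \<in> {0, 1})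
           \<and> (\<Sum>i=1..n. c i * xb i) \<le> (1 + 2 * \<epsilon>) * (\<Sum>i=1..n. c i * xs i)"
proof -
  interpret knapsack_polytope \<epsilon> b n c w \<tau> \<rho>
    using eps n c_nonneg w_nonneg c1 tau rho_len rho_range by unfold_locales auto
  obtain y where y: "y \<in> P" "\<forall>i\<in>{1..n}. y i \<in> {0, 1}" "cost y \<le> (1 + \<epsilon>) * cost xs"
    using extreme_point_rounding[OF ext] by blast
  have "1 \<le> cost xs" using cost_ge_1 ext by (simp add: extreme_pt_def)
  then have "(1 + \<epsilon>) * cost xs \<le> (1 + 2 * \<epsilon>) * cost xs"
    using eps(1) by (intro mult_right_mono) auto
  then show ?thesis using y by force
qed

end
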